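(* For every $z\in\mathbb{D}^*$, $\Gamma_z=\{a-b: a,b\in\Lambda_z\}$.
   Context: For $z\in\mathbb{D}^*=\{0<|z|<1\}$, $f(x)=zx$, $g(x)=z(x-1)+1$, and $\Lambda_z$ is the unique nonempty compact subset of $\mathbb{C}$ with $\Lambda_z=f(\Lambda_z)\cup g(\Lambda_z)$. $\Gamma_z$ is the unique nonempty compact subset of $\mathbb{C}$ that equals the union of its images under the three maps $x\mapsto z(x+1)-1$, $x\mapsto zx$, $x\mapsto z(x-1)+1$. *)

theory Defs
  imports "HOL-Analysis.Analysis"
begin

definition Lambda_set :: "complex \<Rightarrow> complex set" where
  "Lambda_set z = (THE K. K \<noteq> {} \<and> compact K \<and>
      K = (\<lambda>x. z * x) ` K \<union> (\<lambda>x. z * (x - 1) + 1) ` K)"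

definition Gamma_set :: "complex \<Rightarrow> complex set" where
  "Gamma_set z = (THE K. K \<noteq> {} \<and> compact K \<and>
      K = (\<lambda>x. z * (x + 1) - 1) ` K \<union> (\<lambda>x. z * x) ` K \<union> (\<lambda>x. z * (x - 1) + 1) ` K)"

end

theory Submission
  imports Defs
begin

text \<open>Both \<open>\<Lambda>\<^sub>z\<close> and \<open>\<Gamma>\<^sub>z\<close> are attractors of iterated function systems of similarities
  \<open>x \<mapsto> z x + c\<close> with the common ratio \<open>z\<close>, and such an attractor is unique. If \<open>L\<close> is the
  attractor for translations \<open>C\<close>, then \<open>z a + c - (z b + d) = z (a - b) + (c - d)\<close> shows that
  \<open>L - L\<close> is the attractor for the translations \<open>C - C\<close>; for \<open>C = {0, 1 - z}\<close> these are exactly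
  the three translations \<open>z - 1, 0, 1 - z\<close> of \<open>\<Gamma>\<^sub>z\<close>.\<close>

definition hutchinson :: "'a::real_normed_field \<Rightarrow> 'a set \<Rightarrow> 'a set \<Rightarrow> 'a set" where
  "hutchinson z C K = (\<Union>c\<in>C. (\<lambda>x. z * x + c) ` K)"

definition self_similar :: "'a::real_normed_field \<Rightarrow> 'a set \<Rightarrow> 'a set \<Rightarrow> bool" where
  "self_similar z C K \<longleftrightarrow> K \<noteq> {} \<and> compact K \<and> K = hutchinson z C K"

lemma hutchinson_mono: "A \<subseteq> B \<Longrightarrow> hutchinson z C A \<subseteq> hutchinson z C B"
  unfolding hutchinson_def by auto

lemma hutchinson_eq_empty_iff: "hutchinson z C K = {} \<longleftrightarrow> C = {} \<or> K = {}"
  unfolding hutchinson_def by auto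

lemma compact_hutchinson: "finite C \<Longrightarrow> compact K \<Longrightarrow> compact (hutchinson z C K)"
  unfolding hutchinson_def
  by (intro compact_UN) (auto intro!: compact_continuous_image continuous_intros)

lemma self_similarD:
  assumes "self_similar z C K"
  shows "K \<noteq> {}" "compact K" "K = hutchinson z C K"
proof -
  have K: "K \<noteq> {} \<and> compact K \<and> K = hutchinson z C K"
    using assms unfolding self_similar_def .
  show "K \<noteq> {}"
    using K by (rule conjunct1)
  show "compact K"
    using K by (rule conjunct1[OF conjunct2])
  show "K = hutchinson z C K"
    using K by (rule conjunct2[OF conjunct2])
qed

lemma self_similarI:
  "K \<noteq> {} \<Longrightarrow> compact K \<Longrightarrow> K = hutchinson z C K \<Longrightarrow> self_similar z C K"
  unfolding self_similar_def by (intro conjI)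

lemma self_similar_memE:
  assumes "self_similar z C K" "x \<in> K"
  obtains c y where "c \<in> C" "y \<in> K" "x = z * y + c"
  using assms self_similarD(3)[OF assms(1)] unfolding hutchinson_def by blast

lemma self_similar_image_mem:
  assumes "self_similar z C K" "c \<in> C" "y \<in> K"
  shows "z * y + c \<in> K"
  using assms self_similarD(3)[OF assms(1)] unfolding hutchinson_def by blast

lemma self_similar_infdist_contracts:
  fixes z :: "'a::{real_normed_field,heine_borel}"
  assumes K: "self_similar z C K" and L: "self_similar z C L" and "x \<in> K"
  obtains y where "y \<in> K" "infdist x L \<le> norm z * infdist y L"
proof -
  obtain c y where c: "c \<in> C" and y: "y \<in> K" and x: "x = z * y + c"
    using self_similar_memE[OF K \<open>x \<in> K\<close>] by blast
  obtain w where w: "w \<in> L" "infdist y L = dist y w"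
    using infdist_attains_inf[OF compact_imp_closed[OF self_similarD(2)[OF L]] self_similarD(1)[OF L]]
    by blast
  have "z * w + c \<in> L"
    using self_similar_image_mem[OF L c w(1)] .
  then have "infdist x L \<le> dist x (z * w + c)"
    by (rule infdist_le)
  also have "\<dots> = norm z * infdist y L"
    by (simp add: x w(2) dist_norm right_diff_distrib[symmetric] norm_mult)
  finally show thesis
    using y that by blast
qed

lemma self_similar_subset:
  fixes z :: "'a::{real_normed_field,heine_borel}"
  assumes "norm z < 1" "self_similar z C K" "self_similar z C L"
  shows "K \<subseteq> L"
proof -
  have K: "K \<noteq> {}" "compact K"
    using self_similarD(1,2)[OF assms(2)] .
  have L: "closed L" "L \<noteq> {}"
    using self_similarD(1,2)[OF assms(3)] compact_imp_closed by blast+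
  have "compact ((\<lambda>x. infdist x L) ` K)"
    using K(2) by (intro compact_continuous_image continuous_intros)
  then have bdd: "bdd_above ((\<lambda>x. infdist x L) ` K)"
    by (intro bounded_imp_bdd_above compact_imp_bounded)
  define d where "d = (SUP x\<in>K. infdist x L)"
  have le_d: "infdist x L \<le> d" if "x \<in> K" for x
    unfolding d_def using bdd that by (intro cSup_upper) auto
  have "d \<le> norm z * d"
    unfolding d_def
  proof (rule cSUP_least[OF K(1)])
    fix x assume "x \<in> K"
    then obtain y where "y \<in> K" "infdist x L \<le> norm z * infdist y L"
      by (rule self_similar_infdist_contracts[OF assms(2,3)])
    then show "infdist x L \<le> norm z * (SUP x\<in>K. infdist x L)"
      using le_d[of y] unfolding d_def by (meson mult_left_mono norm_ge_zero order_trans)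
  qed
  then have "(1 - norm z) * d \<le> 0"
    by (simp add: algebra_simps)
  with assms(1) have "d \<le> 0"
    by (simp add: mult_le_0_iff)
  then have "infdist x L = 0" if "x \<in> K" for x
    using le_d[OF that] infdist_nonneg[of x L] by linarith
  then show ?thesis
    using in_closed_iff_infdist_zero[OF L] by blast
qed

lemma self_similar_unique:
  fixes z :: "'a::{real_normed_field,heine_borel}"
  shows "norm z < 1 \<Longrightarrow> self_similar z C K \<Longrightarrow> self_similar z C L \<Longrightarrow> K = L"
  by (meson self_similar_subset subset_antisym)

lemma hutchinson_cball_subset:
  fixes z :: "'a::real_normed_field"
  assumes "norm z < 1" "finite C"
  defines "R \<equiv> (\<Sum>c\<in>C. norm c) / (1 - norm z)"
  shows "hutchinson z C (cball 0 R) \<subseteq> cball 0 R"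
proof
  fix x assume "x \<in> hutchinson z C (cball 0 R)"
  then obtain c y where c: "c \<in> C" and y: "norm y \<le> R" and x: "x = z * y + c"
    by (auto simp: hutchinson_def)
  have "norm c \<le> (\<Sum>c\<in>C. norm c)"
    using c assms(2) by (intro member_le_sum) auto
  also have "\<dots> = R * (1 - norm z)"
    using assms(1) by (simp add: R_def)
  finally have "norm c \<le> R - norm z * R"
    by (simp add: algebra_simps)
  moreover have "norm x \<le> norm z * R + norm c"
    using norm_triangle_ineq[of "z * y" c] mult_left_mono[OF y norm_ge_zero[of z]]
    by (simp add: x norm_mult)
  ultimately show "x \<in> cball 0 R"
    by simp
qed

text \<open>Pulling the intersection inside needs a single translation serving every \<open>S n\<close>; finiteness
  of \<open>C\<close> provides it by the pigeonhole principle.\<close>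

lemma INT_hutchinson_subset:
  fixes S :: "nat \<Rightarrow> 'a::real_normed_field set"
  assumes "z \<noteq> 0" "finite C" "decseq S"
  shows "(\<Inter>n. hutchinson z C (S n)) \<subseteq> hutchinson z C (\<Inter>n. S n)"
proof
  fix x assume x: "x \<in> (\<Inter>n. hutchinson z C (S n))"
  have preimage: "\<exists>c\<in>C. (x - c) / z \<in> S n" for n
  proof -
    from x have "x \<in> hutchinson z C (S n)"
      by blast
    then obtain c y where "c \<in> C" "y \<in> S n" "x = z * y + c"
      by (auto simp: hutchinson_def)
    with assms(1) show ?thesis
      by (intro bexI[of _ c]) auto
  qed
  have "\<exists>c\<in>C. \<forall>n. (x - c) / z \<in> S n"
  proof (rule ccontr)
    assume "\<not> ?thesis"
    then obtain N where N: "\<And>c. c \<in> C \<Longrightarrow> (x - c) / z \<notin> S (N c)"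
      by metis
    have "(x - c) / z \<notin> S (Max (N ` C))" if "c \<in> C" for c
    proof -
      have "N c \<le> Max (N ` C)"
        using assms(2) that by simp
      then show ?thesis
        using N[OF that] assms(3) by (auto simp: decseq_def)
    qed
    with preimage show False by blast
  qed
  then obtain c where "c \<in> C" "(x - c) / z \<in> (\<Inter>n. S n)"
    by auto
  moreover have "x = z * ((x - c) / z) + c"
    using assms(1) by simp
  ultimately show "x \<in> hutchinson z C (\<Inter>n. S n)"
    unfolding hutchinson_def by blast
qed

lemma self_similar_exists:
  fixes z :: "'a::{real_normed_field,heine_borel}"
  assumes "z \<noteq> 0" "norm z < 1" "finite C" "C \<noteq> {}"
  obtains K where "self_similar z C K"
proof -
  define R where "R = (\<Sum>c\<in>C. norm c) / (1 - norm z)"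
  define S where "S n = (hutchinson z C ^^ n) (cball 0 R)" for n
  have "0 \<le> R"
    using assms(2) by (auto simp: R_def intro!: divide_nonneg_pos sum_nonneg)
  then have S: "compact (S n)" "S n \<noteq> {}" for n
    using assms(3,4) by (induction n) (auto simp: S_def compact_hutchinson hutchinson_eq_empty_iff)
  have S_Suc: "S (Suc n) \<subseteq> S n" for n
  proof (induction n)
    case 0
    show ?case
      using hutchinson_cball_subset[OF assms(2,3)] by (simp add: S_def R_def)
  next
    case (Suc n)
    show ?case
      using hutchinson_mono[OF Suc.IH] by (simp add: S_def)
  qed
  then have dec: "decseq S"
    by (rule decseq_SucI)
  define K where "K = (\<Inter>n. S n)"
  have "hutchinson z C K \<subseteq> S n" for n
  proof -
    have "hutchinson z C K \<subseteq> hutchinson z C (S n)"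
      by (rule hutchinson_mono) (auto simp: K_def)
    also have "\<dots> = S (Suc n)"
      by (simp add: S_def)
    finally show ?thesis
      using S_Suc by blast
  qed
  then have "hutchinson z C K \<subseteq> K"
    by (auto simp: K_def)
  moreover have "K \<subseteq> hutchinson z C K"
  proof -
    have "K \<subseteq> (\<Inter>n. S (Suc n))"
      by (auto simp: K_def)
    also have "\<dots> = (\<Inter>n. hutchinson z C (S n))"
      by (simp add: S_def)
    also have "\<dots> \<subseteq> hutchinson z C K"
      unfolding K_def by (rule INT_hutchinson_subset[OF assms(1,3) dec])
    finally show ?thesis .
  qed
  moreover have "K \<noteq> {}"
    unfolding K_def using S dec by (intro compact_nest) (auto simp: decseq_def)
  moreover have "compact K"
    unfolding K_def using S by (intro compact_Inter) auto
  ultimately show thesis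
    by (intro that self_similarI subset_antisym)
qed

lemma the_self_similar:
  fixes z :: "'a::{real_normed_field,heine_borel}"
  assumes "z \<noteq> 0" "norm z < 1" "finite C" "C \<noteq> {}"
  shows "self_similar z C (THE K. self_similar z C K)"
proof -
  obtain K where K: "self_similar z C K"
    using self_similar_exists[OF assms] .
  then show ?thesis
    by (rule theI) (rule self_similar_unique[OF assms(2) _ K])
qed

lemma the_self_similar_eq:
  fixes z :: "'a::{real_normed_field,heine_borel}"
  assumes "norm z < 1" "self_similar z C K"
  shows "(THE K. self_similar z C K) = K"
  using assms(2) by (rule the_equality) (rule self_similar_unique[OF assms(1) _ assms(2)])

lemma self_similar_differences:
  assumes L: "self_similar z C L"
  shows "self_similar z {c - d | c d. c \<in> C \<and> d \<in> C} {a - b | a b. a \<in> L \<and> b \<in> L}"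
proof -
  define D where "D = {a - b | a b. a \<in> L \<and> b \<in> L}"
  have shift: "z * a + c - (z * b + d) = z * (a - b) + (c - d)" for a b c d
    by (simp add: algebra_simps)
  have "D = hutchinson z {c - d | c d. c \<in> C \<and> d \<in> C} D"
  proof (intro equalityI subsetI)
    fix x assume "x \<in> D"
    then obtain a b where "a \<in> L" "b \<in> L" "x = a - b"
      unfolding D_def by blast
    then obtain a' b' c d where "a' \<in> L" "b' \<in> L" "c \<in> C" "d \<in> C"
        "x = z * a' + c - (z * b' + d)"
      using self_similar_memE[OF L] by metis
    then show "x \<in> hutchinson z {c - d | c d. c \<in> C \<and> d \<in> C} D"
      unfolding hutchinson_def D_def shift by blast
  next
    fix x assume "x \<in> hutchinson z {c - d | c d. c \<in> C \<and> d \<in> C} D"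
    then obtain a b c d where "a \<in> L" "b \<in> L" "c \<in> C" "d \<in> C"
        "x = z * a + c - (z * b + d)"
      unfolding hutchinson_def D_def shift by blast
    then show "x \<in> D"
      using self_similar_image_mem[OF L] unfolding D_def by blast
  qed
  moreover have "D \<noteq> {}" "compact D"
    using self_similarD(1,2)[OF L] by (auto simp: D_def compact_differences)
  ultimately show ?thesis
    unfolding D_def by (intro self_similarI)
qed

lemma Lambda_set_eq_the_self_similar:
  "Lambda_set z = (THE K. self_similar z {0, 1 - z} K)"
proof -
  have shift: "(\<lambda>x. z * (x - 1) + 1) = (\<lambda>x. z * x + (1 - z))"
    by (auto simp: algebra_simps)
  show ?thesis
    unfolding Lambda_set_def self_similar_def hutchinson_def shift by simp
qed

lemma Gamma_set_eq_the_self_similar: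
  "Gamma_set z = (THE K. self_similar z {z - 1, 0, 1 - z} K)"
proof -
  have shift: "(\<lambda>x. z * (x - 1) + 1) = (\<lambda>x. z * x + (1 - z))"
    "(\<lambda>x. z * (x + 1) - 1) = (\<lambda>x. z * x + (z - 1))"
    by (auto simp: algebra_simps)
  show ?thesis
    unfolding Gamma_set_def self_similar_def hutchinson_def shift by (simp add: Un_assoc)
qed

theorem lemma6p1p1:
  fixes z :: complex
  assumes "0 < norm z" and "norm z < 1"
  shows "Gamma_set z = {a - b | a b. a \<in> Lambda_set z \<and> b \<in> Lambda_set z}"
proof -
  have "{c - d | c d. c \<in> {0, 1 - z} \<and> d \<in> {0, 1 - z}}
      = (\<Union>c\<in>{0, 1 - z}. \<Union>d\<in>{0, 1 - z}. {c - d})"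
    by blast
  also have "\<dots> = {z - 1, 0, 1 - z}"
    by auto
  finally have shifts: "{c - d | c d. c \<in> {0, 1 - z} \<and> d \<in> {0, 1 - z}} = {z - 1, 0, 1 - z}" .
  have Lambda: "self_similar z {0, 1 - z} (Lambda_set z)"
    unfolding Lambda_set_eq_the_self_similar using assms by (intro the_self_similar) auto
  have Gamma: "self_similar z {z - 1, 0, 1 - z}
      {a - b | a b. a \<in> Lambda_set z \<and> b \<in> Lambda_set z}"
    using self_similar_differences[OF Lambda] unfolding shifts .
  show ?thesis
    unfolding Gamma_set_eq_the_self_similar using assms(2) Gamma by (rule the_self_similar_eq)
qed

end
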